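(* Let $\vec K_4$ be the complete digraph on $\{1,2,3,4\}$ (arc $(i,j)$ for all distinct $i,j$). Then $\chi(\partial(\partial(\vec K_4)))\le 3$; explicitly, identifying vertices of $\partial(\partial(\vec K_4))$ with sequences $ijk$ with $i,j,k\in\{1,2,3,4\}$, $i\ne j$, $j\ne k$, the map $c(ijk)=j$ if $j\ne4$ and $c(ijk)=s$ for some $s\in\{1,2,3\}\setminus\{i,k\}$ if $j=4$ is a proper $3$-colouring. Consequently, for every digraph $D$ with $\chi(D)\le 4$, $\chi(\partial(\partial(D)))\le 3$.
   Context: For a digraph $D$ with arc set $A(D)$, $\chi(D)$ is the chromatic number of its underlying graph. $\partial(D)$ has vertex set $A(D)$, with an arc from $(x,y)$ to $(x',y')$ iff $y=x'$. A vertex of $\partial(\partial(\vec K_4))$ is an arc $((i,j),(j,k))$ of $\partial(\vec K_4)$, written $ijk$. *)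

theory Defs
  imports Main
begin

type_synonym 'a digraph = "'a set \<times> ('a \<times> 'a) set"

definition verts :: "'a digraph \<Rightarrow> 'a set" where "verts D = fst D"
definition arcs :: "'a digraph \<Rightarrow> ('a \<times> 'a) set" where "arcs D = snd D"

definition is_digraph :: "'a digraph \<Rightarrow> bool" where
  "is_digraph D \<longleftrightarrow> arcs D \<subseteq> verts D \<times> verts D \<and> (\<forall>x. (x, x) \<notin> arcs D)"

definition line_digraph :: "'a digraph \<Rightarrow> ('a \<times> 'a) digraph" where
  "line_digraph D = (arcs D,
     {(e, f). e \<in> arcs D \<and> f \<in> arcs D \<and> snd e = fst f})"

definition proper_colouring :: "'a digraph \<Rightarrow> ('a \<Rightarrow> 'c) \<Rightarrow> bool" where
  "proper_colouring D c \<longleftrightarrow> (\<forall>(u, v) \<in> arcs D. c u \<noteq> c v)"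

definition colourable :: "'a digraph \<Rightarrow> nat \<Rightarrow> bool" where
  "colourable D k \<longleftrightarrow> (\<exists>c :: 'a \<Rightarrow> nat. c ` verts D \<subseteq> {..<k} \<and> proper_colouring D c)"

text \<open>Chromatic number of the underlying graph (for finite loopless digraphs).\<close>
definition chi :: "'a digraph \<Rightarrow> nat" where
  "chi D = (LEAST k. colourable D k)"

definition K4 :: "nat digraph" where
  "K4 = ({1,2,3,4}, {(i, j). i \<in> {1,2,3,4} \<and> j \<in> {1,2,3,4} \<and> i \<noteq> j})"

end

theory Submission
  imports Defs
begin

text \<open>A proper 4-colouring of \<open>D\<close> is the same as a homomorphism \<open>D \<rightarrow> K4\<close>, the line digraph
  construction maps homomorphisms to homomorphisms, and colourings pull back along
  homomorphisms. Hence it suffices to 3-colour \<open>\<partial>(\<partial>(K4))\<close>. There, an arc goes from \<open>ijk\<close> to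
  \<open>jkl\<close> with \<open>j \<noteq> k\<close>; colouring \<open>ijk\<close> by its middle vertex \<open>j\<close> unless \<open>j = 4\<close>, and otherwise by a
  colour in \<open>{1,2,3}\<close> avoiding both neighbours \<open>i\<close> and \<open>k\<close>, separates the two ends of every arc.\<close>

definition digraph_hom :: "'a digraph \<Rightarrow> 'b digraph \<Rightarrow> ('a \<Rightarrow> 'b) \<Rightarrow> bool" where
  "digraph_hom D H h \<longleftrightarrow> h ` verts D \<subseteq> verts H \<and> (\<forall>(u, v) \<in> arcs D. (h u, h v) \<in> arcs H)"

lemma line_digraph_hom:
  assumes "digraph_hom D H h"
  shows "digraph_hom (line_digraph D) (line_digraph H) (map_prod h h)"
  using assms unfolding digraph_hom_def line_digraph_def verts_def arcs_def by fastforce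

lemma colourable_hom:
  assumes "digraph_hom D H h" and "colourable H k"
  shows "colourable D k"
proof -
  obtain c :: "_ \<Rightarrow> nat" where c: "c ` verts H \<subseteq> {..<k}" "proper_colouring H c"
    using assms(2) unfolding colourable_def by blast
  have "(c \<circ> h) ` verts D \<subseteq> {..<k}"
    using assms(1) c(1) unfolding digraph_hom_def by fastforce
  moreover have "proper_colouring D (c \<circ> h)"
    using assms(1) c(2) unfolding digraph_hom_def proper_colouring_def by fastforce
  ultimately show ?thesis unfolding colourable_def by blast
qed

lemma colourable_mono: "colourable D k \<Longrightarrow> k \<le> m \<Longrightarrow> colourable D m"
  unfolding colourable_def by (meson lessThan_subset_iff order_trans)

lemma colourable_if_colours_atLeastAtMost:
  assumes "arcs D \<subseteq> verts D \<times> verts D"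
    and "c ` verts D \<subseteq> {1..k}" and "proper_colouring D c"
  shows "colourable D k"
proof -
  have c_range: "c x \<in> {1..k}" if "x \<in> verts D" for x
    using assms(2) that by blast
  have "(\<lambda>x. c x - 1) ` verts D \<subseteq> {..<k}"
  proof (rule image_subsetI)
    fix x assume "x \<in> verts D"
    then show "c x - 1 \<in> {..<k}" using c_range[of x] by auto
  qed
  moreover have "c u - 1 \<noteq> c v - 1" if "(u, v) \<in> arcs D" for u v
  proof -
    have "c u \<noteq> c v" using assms(3) that unfolding proper_colouring_def by blast
    moreover have "c u \<in> {1..k}" "c v \<in> {1..k}" using c_range assms(1) that by blast+
    ultimately show ?thesis by auto
  qed
  then have "proper_colouring D (\<lambda>x. c x - 1)"
    unfolding proper_colouring_def by blast
  ultimately show ?thesis unfolding colourable_def by blast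
qed

lemma colourable_card_verts:
  assumes "is_digraph D" and "finite (verts D)"
  shows "colourable D (card (verts D))"
proof -
  obtain h where h: "bij_betw h (verts D) {..<card (verts D)}"
    using assms(2) ex_bij_betw_finite_nat[of "verts D"] atLeast0LessThan by auto
  have "proper_colouring D h" unfolding proper_colouring_def
  proof clarify
    fix u v assume uv: "(u, v) \<in> arcs D" "h u = h v"
    then have "u \<in> verts D" "v \<in> verts D" "u \<noteq> v"
      using assms(1) unfolding is_digraph_def by auto
    with h uv(2) show False by (metis bij_betw_imp_inj_on inj_onD)
  qed
  with h show ?thesis unfolding colourable_def using bij_betw_imp_surj_on by blast
qed

lemma colourable_chi:
  assumes "is_digraph D" and "finite (verts D)"
  shows "colourable D (chi D)"
  unfolding chi_def using colourable_card_verts[OF assms] by (rule LeastI)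

lemma chi_le: "colourable D k \<Longrightarrow> chi D \<le> k"
  unfolding chi_def by (rule Least_le)

lemma K4_arcs: "arcs K4 = {(i, j). i \<in> {1,2,3,4} \<and> j \<in> {1,2,3,4} \<and> i \<noteq> j}"
  unfolding K4_def arcs_def by simp

lemma digraph_hom_K4_if_colourable:
  assumes "is_digraph D" and "colourable D 4"
  obtains h where "digraph_hom D K4 h"
proof -
  obtain f :: "_ \<Rightarrow> nat" where f: "f ` verts D \<subseteq> {..<4}" "proper_colouring D f"
    using assms(2) unfolding colourable_def by blast
  have "digraph_hom D K4 (\<lambda>x. f x + 1)"
    unfolding digraph_hom_def
  proof
    show "(\<lambda>x. f x + 1) ` verts D \<subseteq> verts K4"
      using f(1) unfolding K4_def verts_def by fastforce
    have "u \<in> verts D" "v \<in> verts D" if "(u, v) \<in> arcs D" for u v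
      using assms(1) that unfolding is_digraph_def by auto
    then show "\<forall>(u, v) \<in> arcs D. (f u + 1, f v + 1) \<in> arcs K4"
      using f unfolding K4_arcs proper_colouring_def by fastforce
  qed
  then show thesis by (rule that)
qed

lemma arcs_line_digraph_subset: "arcs (line_digraph D) \<subseteq> verts (line_digraph D) \<times> verts (line_digraph D)"
  unfolding line_digraph_def verts_def arcs_def by auto

lemma verts_line_line_digraphE:
  assumes "p \<in> verts (line_digraph (line_digraph D))"
  obtains x y z where "p = ((x, y), (y, z))" "(x, y) \<in> arcs D" "(y, z) \<in> arcs D"
  using assms unfolding line_digraph_def verts_def arcs_def by auto

lemma arcs_line_line_digraph:
  "arcs (line_digraph (line_digraph D)) =
     {(((x, y), (y', z)), ((u, v), (v', w))). (x, y) \<in> arcs D \<and> (y', z) \<in> arcs D \<and> y' = y \<and>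
        (u, v) \<in> arcs D \<and> (v', w) \<in> arcs D \<and> v' = v \<and> u = y \<and> v = z}"
  unfolding line_digraph_def arcs_def by auto

lemma arcs_line_line_digraphE:
  assumes "(p, q) \<in> arcs (line_digraph (line_digraph D))"
  obtains x y z w where "p = ((x, y), (y, z))" "q = ((y, z), (z, w))"
    "(x, y) \<in> arcs D" "(y, z) \<in> arcs D" "(z, w) \<in> arcs D"
  using assms unfolding arcs_line_line_digraph by (cases p; cases q) (auto split: prod.splits)

lemma K4_line_line_colouring_proper:
  fixes c :: "(nat \<times> nat) \<times> (nat \<times> nat) \<Rightarrow> nat"
  assumes c: "\<forall>i j k. ((i, j), (j, k)) \<in> verts (line_digraph (line_digraph K4)) \<longrightarrow>
              (j \<noteq> 4 \<longrightarrow> c ((i, j), (j, k)) = j) \<and>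
              (j = 4 \<longrightarrow> c ((i, j), (j, k)) \<in> {1, 2, 3} - {i, k})"
  shows "c ` verts (line_digraph (line_digraph K4)) \<subseteq> {1, 2, 3}"
    and "proper_colouring (line_digraph (line_digraph K4)) c"
proof -
  show "c ` verts (line_digraph (line_digraph K4)) \<subseteq> {1, 2, 3}"
  proof (rule image_subsetI)
    fix p assume p: "p \<in> verts (line_digraph (line_digraph K4))"
    then obtain i j k where "p = ((i, j), (j, k))" "(i, j) \<in> arcs K4"
      by (rule verts_line_line_digraphE)
    with p c show "c p \<in> {1, 2, 3}" unfolding K4_arcs by (cases "j = 4") auto
  qed
  show "proper_colouring (line_digraph (line_digraph K4)) c"
    unfolding proper_colouring_def
  proof clarify
    fix p q assume pq: "(p, q) \<in> arcs (line_digraph (line_digraph K4))" "c p = c q"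
    from pq(1) obtain i j k l where p: "p = ((i, j), (j, k))" and q: "q = ((j, k), (k, l))"
      and "(i, j) \<in> arcs K4" "(j, k) \<in> arcs K4" "(k, l) \<in> arcs K4"
      by (rule arcs_line_line_digraphE)
    then have "j \<noteq> k" unfolding K4_arcs by simp
    moreover have "(j \<noteq> 4 \<longrightarrow> c p = j) \<and> (j = 4 \<longrightarrow> c p \<in> {1, 2, 3} - {i, k})"
      and "(k \<noteq> 4 \<longrightarrow> c q = k) \<and> (k = 4 \<longrightarrow> c q \<in> {1, 2, 3} - {j, l})"
      using c arcs_line_digraph_subset pq(1) unfolding p q by blast+
    ultimately show False using pq(2) by auto
  qed
qed

text \<open>The final \<open>3\<close> is admissible because both earlier tests failing forces \<open>{i, k} = {1, 2}\<close>.\<close>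

definition K4_line_line_colour :: "(nat \<times> nat) \<times> (nat \<times> nat) \<Rightarrow> nat" where
  "K4_line_line_colour = (\<lambda>((i, j), (_, k)).
     if j \<noteq> 4 then j else if 1 \<notin> {i, k} then 1 else if 2 \<notin> {i, k} then 2 else 3)"

lemma colourable_K4_line_line_3: "colourable (line_digraph (line_digraph K4)) 3"
proof -
  have "\<forall>i j k. ((i, j), (j, k)) \<in> verts (line_digraph (line_digraph K4)) \<longrightarrow>
          (j \<noteq> 4 \<longrightarrow> K4_line_line_colour ((i, j), (j, k)) = j) \<and>
          (j = 4 \<longrightarrow> K4_line_line_colour ((i, j), (j, k)) \<in> {1, 2, 3} - {i, k})"
    unfolding K4_line_line_colour_def by auto
  from K4_line_line_colouring_proper[OF this] show ?thesis
    by (intro colourable_if_colours_atLeastAtMost arcs_line_digraph_subset)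
      auto
qed

lemma chi_line_line_le_3_if_chi_le_4:
  assumes "is_digraph D" and "finite (verts D)" and "chi D \<le> 4"
  shows "chi (line_digraph (line_digraph D)) \<le> 3"
proof -
  have "colourable D 4"
    using colourable_chi[OF assms(1,2)] assms(3) by (rule colourable_mono)
  then obtain h where "digraph_hom D K4 h"
    using assms(1) by (blast elim: digraph_hom_K4_if_colourable)
  then have "digraph_hom (line_digraph (line_digraph D)) (line_digraph (line_digraph K4))
               (map_prod (map_prod h h) (map_prod h h))"
    by (intro line_digraph_hom)
  then show ?thesis
    using colourable_K4_line_line_3 by (intro chi_le) (rule colourable_hom)
qed

theorem mainTheorem12:
  shows "chi (line_digraph (line_digraph K4)) \<le> 3
    \<and> (\<forall>c :: (nat \<times> nat) \<times> (nat \<times> nat) \<Rightarrow> nat.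
          (\<forall>i j k. ((i, j), (j, k)) \<in> verts (line_digraph (line_digraph K4)) \<longrightarrow>
              (j \<noteq> 4 \<longrightarrow> c ((i, j), (j, k)) = j) \<and>
              (j = 4 \<longrightarrow> c ((i, j), (j, k)) \<in> {1, 2, 3} - {i, k}))
          \<longrightarrow> c ` verts (line_digraph (line_digraph K4)) \<subseteq> {1, 2, 3}
              \<and> proper_colouring (line_digraph (line_digraph K4)) c)
    \<and> (\<forall>D :: 'a digraph. is_digraph D \<and> finite (verts D) \<and> chi D \<le> 4 \<longrightarrow>
          chi (line_digraph (line_digraph D)) \<le> 3)"
  using chi_le[OF colourable_K4_line_line_3] K4_line_line_colouring_proper
    chi_line_line_le_3_if_chi_le_4 by blast

end
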